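(* Consider $N$ sellers $i=1,\dots,N$ over a time horizon $[0,H]$, a reserve-utility function $\underline{R}:[0,H]\to\mathbb{R}$, and selection functions $f_i:\mathbb{R}^N\times\mathbb{R}\to\mathbb{R}$. Each seller $i$ has true-metric functions $e_i^T,e_i^C:[0,H]\to\mathbb{R}$ (under treatment/control) and estimated-score functions $\hat e_i^T,\hat e_i^C:[0,H]\to\mathbb{R}$. Suppose $\hat e_i^C(t)=\hat e_i^T(t)$ for all $i=1,\dots,N$ and $t\in[0,H]$. In the naive seller-side experiment without feedback loops (defined in the context), let each seller be independently assigned to the treatment group $\mathcal{T}$ with probability $p\in(0,1)$ and otherwise to the control group $\mathcal{C}$. Then the estimator $\widehat{GTE}$ is unbiased for $\mathrm{GTE}$, i.e. $\mathbb{E}[\widehat{GTE}]=\mathrm{GTE}$, where the expectation is over the random assignment.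
   Context: Setting without feedback loops: the ranking score of a seller equals its estimated score. Global treatment regime: for all $i$ and $t$, $r_i^{GT}(t)=\hat e_i^T(t)$, $I_i^{GT}(t)=\mathbb{I}\{f_i(r_1^{GT}(t),\dots,r_N^{GT}(t),\underline{R}(t))\ge 0\}$, $O_i^{GT}(t)=I_i^{GT}(t)e_i^T(t)$. Global control regime: the same with $\hat e_i^C$ and $e_i^C$ in place of $\hat e_i^T$ and $e_i^T$, giving $r_i^{GC},I_i^{GC},O_i^{GC}$. The global treatment effect is $\mathrm{GTE}=\frac1N\sum_{i=1}^N\int_0^H\big(O_i^{GT}(t)-O_i^{GC}(t)\big)dt$. Naive seller-side experiment: given a partition $\{1,\dots,N\}=\mathcal{T}\cup\mathcal{C}$ (disjoint), for $i\in\mathcal{T}$ set $E=T$ and for $i\in\mathcal{C}$ set $E=C$; then $r_i^E(t)=\hat e_i^E(t)$, $I_i^E(t)=\mathbb{I}\{f_i(\{r_j^T(t):j\in\mathcal{T}\}\cup\{r_j^C(t):j\in\mathcal{C}\},\underline{R}(t))\ge0\}$ (i.e. $f_i$ evaluated at the vector whose $j$-th entry is seller $j$'s own-group score), and $O_i^E(t)=I_i^E(t)e_i^E(t)$. The estimator is $\widehat{GTE}=\frac{1}{Np}\sum_{i\in\mathcal{T}}\int_0^H O_i^T(t)dt-\frac{1}{N(1-p)}\sum_{i\in\mathcal{C}}\int_0^H O_i^C(t)dt$. *)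

theory Defs
  imports "HOL-Analysis.Analysis" "HOL-Probability.Probability"
begin

text \<open>Sellers are the elements of a finite type 'n, so N = CARD('n) and
  ranking-score vectors live in real^'n. Time functions are real => real,
  only their values on {0..H} matter. f i r u is the selection function
  f_i(r, u); e i t is e_i(t).\<close>

definition sel_ind ::
  "('n::finite \<Rightarrow> real^'n \<Rightarrow> real \<Rightarrow> real) \<Rightarrow> (real \<Rightarrow> real^'n) \<Rightarrow> (real \<Rightarrow> real) \<Rightarrow> 'n \<Rightarrow> real \<Rightarrow> real"
  where "sel_ind f r Rlow i t = (if f i (r t) (Rlow t) \<ge> 0 then 1 else 0)"

definition global_outcome ::
  "('n::finite \<Rightarrow> real^'n \<Rightarrow> real \<Rightarrow> real) \<Rightarrow> (real \<Rightarrow> real) \<Rightarrow> ('n \<Rightarrow> real \<Rightarrow> real)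
    \<Rightarrow> ('n \<Rightarrow> real \<Rightarrow> real) \<Rightarrow> 'n \<Rightarrow> real \<Rightarrow> real"
  where "global_outcome f Rlow e ehat i t =
           sel_ind f (\<lambda>s. \<chi> j. ehat j s) Rlow i t * e i t"

definition GTE ::
  "real \<Rightarrow> ('n::finite \<Rightarrow> real^'n \<Rightarrow> real \<Rightarrow> real) \<Rightarrow> (real \<Rightarrow> real)
    \<Rightarrow> ('n \<Rightarrow> real \<Rightarrow> real) \<Rightarrow> ('n \<Rightarrow> real \<Rightarrow> real)
    \<Rightarrow> ('n \<Rightarrow> real \<Rightarrow> real) \<Rightarrow> ('n \<Rightarrow> real \<Rightarrow> real) \<Rightarrow> real"
  where "GTE H f Rlow eT eC ehT ehC =
     (1 / real CARD('n)) * (\<Sum>i\<in>UNIV. integral {0..H}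
        (\<lambda>t. global_outcome f Rlow eT ehT i t - global_outcome f Rlow eC ehC i t))"

definition exp_rank ::
  "'n::finite set \<Rightarrow> ('n \<Rightarrow> real \<Rightarrow> real) \<Rightarrow> ('n \<Rightarrow> real \<Rightarrow> real) \<Rightarrow> real \<Rightarrow> real^'n"
  where "exp_rank Tg ehT ehC t = (\<chi> j. if j \<in> Tg then ehT j t else ehC j t)"

definition exp_outcome ::
  "'n::finite set \<Rightarrow> ('n \<Rightarrow> real^'n \<Rightarrow> real \<Rightarrow> real) \<Rightarrow> (real \<Rightarrow> real)
    \<Rightarrow> ('n \<Rightarrow> real \<Rightarrow> real) \<Rightarrow> ('n \<Rightarrow> real \<Rightarrow> real) \<Rightarrow> ('n \<Rightarrow> real \<Rightarrow> real)
    \<Rightarrow> 'n \<Rightarrow> real \<Rightarrow> real"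
  where "exp_outcome Tg f Rlow e ehT ehC i t =
           sel_ind f (exp_rank Tg ehT ehC) Rlow i t * e i t"

definition GTE_hat ::
  "real \<Rightarrow> real \<Rightarrow> 'n::finite set \<Rightarrow> ('n \<Rightarrow> real^'n \<Rightarrow> real \<Rightarrow> real) \<Rightarrow> (real \<Rightarrow> real)
    \<Rightarrow> ('n \<Rightarrow> real \<Rightarrow> real) \<Rightarrow> ('n \<Rightarrow> real \<Rightarrow> real)
    \<Rightarrow> ('n \<Rightarrow> real \<Rightarrow> real) \<Rightarrow> ('n \<Rightarrow> real \<Rightarrow> real) \<Rightarrow> real"
  where "GTE_hat p H Tg f Rlow eT eC ehT ehC =
     (1 / (real CARD('n) * p)) * (\<Sum>i\<in>Tg. integral {0..H} (exp_outcome Tg f Rlow eT ehT ehC i))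
   - (1 / (real CARD('n) * (1 - p))) * (\<Sum>i\<in>UNIV - Tg. integral {0..H} (exp_outcome Tg f Rlow eC ehT ehC i))"

definition assignment :: "real \<Rightarrow> ('n::finite \<Rightarrow> bool) pmf"
  where "assignment p = Pi_pmf UNIV False (\<lambda>_. bernoulli_pmf p)"

end

theory Submission
  imports Defs
begin

text \<open>When the treatment leaves the estimated scores unchanged, every seller is ranked by the
  same score vector in the experiment as in either global regime, so the experimental outcome
  of seller \<open>i\<close> integrates to its global-treatment value \<open>a\<^sub>i\<close> if treated and to its
  global-control value \<open>b\<^sub>i\<close> otherwise. The estimator is then a Horvitz--Thompson difference
  of means, and since each seller is treated with probability \<open>p\<close>, linearity of expectation
  gives \<open>(1/N) \<Sum>\<^sub>i (a\<^sub>i - b\<^sub>i) = GTE\<close>.\<close>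

lemma exp_rank_same_estimates:
  assumes "\<forall>j. ehC j t = ehT j t"
  shows "exp_rank Tg ehT ehC t = (\<chi> j. ehT j t)"
  using assms unfolding exp_rank_def by (simp add: vec_eq_iff)

lemma exp_outcome_same_estimates:
  assumes "\<forall>j. ehC j t = ehT j t"
  shows "exp_outcome Tg f Rlow e ehT ehC i t = global_outcome f Rlow e ehT i t"
    and "exp_outcome Tg f Rlow e ehT ehC i t = global_outcome f Rlow e ehC i t"
  using assms
  by (simp_all add: exp_outcome_def global_outcome_def sel_ind_def exp_rank_same_estimates)

lemma expectation_assignment_component:
  fixes g :: "bool \<Rightarrow> real" and i :: "'n::finite"
  assumes "0 \<le> p" "p \<le> 1"
  shows "measure_pmf.expectation (assignment p) (\<lambda>\<omega>. g (\<omega> i)) = p * g True + (1 - p) * g False"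
proof -
  have "map_pmf (\<lambda>\<omega>. \<omega> i) (assignment p) = bernoulli_pmf p"
    unfolding assignment_def by (simp add: Pi_pmf_component)
  then have "measure_pmf.expectation (assignment p) (\<lambda>\<omega>. g (\<omega> i))
           = measure_pmf.expectation (bernoulli_pmf p) g"
    by (metis integral_map_pmf)
  then show ?thesis using assms by simp
qed

lemma expectation_assignment_sum:
  fixes g :: "'n::finite \<Rightarrow> bool \<Rightarrow> real"
  assumes "0 \<le> p" "p \<le> 1"
  shows "measure_pmf.expectation (assignment p) (\<lambda>\<omega>. \<Sum>i\<in>UNIV. g i (\<omega> i))
       = (\<Sum>i\<in>UNIV. p * g i True + (1 - p) * g i False)"
proof -
  have "measure_pmf.expectation (assignment p) (\<lambda>\<omega>. \<Sum>i\<in>UNIV. g i (\<omega> i))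
      = (\<Sum>i\<in>UNIV. measure_pmf.expectation (assignment p) (\<lambda>\<omega>. g i (\<omega> i)))"
    by (rule Bochner_Integration.integral_sum) (simp add: integrable_measure_pmf_finite)
  then show ?thesis using assms by (simp add: expectation_assignment_component)
qed

lemma expectation_sum_treated:
  fixes a :: "'n::finite \<Rightarrow> real"
  assumes "0 \<le> p" "p \<le> 1"
  shows "measure_pmf.expectation (assignment p) (\<lambda>\<omega>. \<Sum>i\<in>{i. \<omega> i}. a i) = p * (\<Sum>i\<in>UNIV. a i)"
proof -
  have "(\<Sum>i\<in>{i. \<omega> i}. a i) = (\<Sum>i\<in>UNIV. if \<omega> i then a i else 0)" for \<omega>
    by (simp add: sum.If_cases)
  then show ?thesis
    using expectation_assignment_sum[OF assms, of "\<lambda>i x. if x then a i else 0"]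
    by (simp add: sum_distrib_left)
qed

lemma expectation_sum_control:
  fixes b :: "'n::finite \<Rightarrow> real"
  assumes "0 \<le> p" "p \<le> 1"
  shows "measure_pmf.expectation (assignment p) (\<lambda>\<omega>. \<Sum>i\<in>UNIV - {i. \<omega> i}. b i)
       = (1 - p) * (\<Sum>i\<in>UNIV. b i)"
proof -
  have "(\<Sum>i\<in>UNIV - {i. \<omega> i}. b i) = (\<Sum>i\<in>UNIV. if \<omega> i then 0 else b i)" for \<omega>
    by (simp add: sum.If_cases Diff_eq)
  then show ?thesis
    using expectation_assignment_sum[OF assms, of "\<lambda>i x. if x then 0 else b i"]
    by (simp add: sum_distrib_left)
qed

lemma expectation_difference_in_means:
  fixes a b :: "'n::finite \<Rightarrow> real"
  assumes "0 < p" "p < 1"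
  shows "measure_pmf.expectation (assignment p)
           (\<lambda>\<omega>. 1 / (real CARD('n) * p) * (\<Sum>i\<in>{i. \<omega> i}. a i)
              - 1 / (real CARD('n) * (1 - p)) * (\<Sum>i\<in>UNIV - {i. \<omega> i}. b i))
       = 1 / real CARD('n) * (\<Sum>i\<in>UNIV. a i - b i)"
  using assms
  by (simp add: integral_diff integrable_measure_pmf_finite expectation_sum_treated
      expectation_sum_control sum_subtractf field_simps)

theorem proposition1:
  fixes H p :: real
    and f :: "'n::finite \<Rightarrow> real^'n \<Rightarrow> real \<Rightarrow> real"
    and Rlow :: "real \<Rightarrow> real"
    and eT eC ehT ehC :: "'n \<Rightarrow> real \<Rightarrow> real"
  assumes p: "0 < p" "p < 1"
    and same_est: "\<forall>i. \<forall>t\<in>{0..H}. ehC i t = ehT i t"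
    and int_T: "\<forall>i. (global_outcome f Rlow eT ehT i) integrable_on {0..H}"
    and int_C: "\<forall>i. (global_outcome f Rlow eC ehC i) integrable_on {0..H}"
  shows "measure_pmf.expectation (assignment p)
           (\<lambda>\<omega>. GTE_hat p H {i. \<omega> i} f Rlow eT eC ehT ehC)
         = GTE H f Rlow eT eC ehT ehC"
proof -
  define a where "a i = integral {0..H} (global_outcome f Rlow eT ehT i)" for i
  define b where "b i = integral {0..H} (global_outcome f Rlow eC ehC i)" for i
  have treated: "integral {0..H} (exp_outcome Tg f Rlow eT ehT ehC i) = a i" for Tg i
    unfolding a_def using same_est by (intro integral_cong) (simp add: exp_outcome_same_estimates(1))
  have control: "integral {0..H} (exp_outcome Tg f Rlow eC ehT ehC i) = b i" for Tg i
    unfolding b_def using same_est by (intro integral_cong) (simp add: exp_outcome_same_estimates(2))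
  have "GTE H f Rlow eT eC ehT ehC = 1 / real CARD('n) * (\<Sum>i\<in>UNIV. a i - b i)"
    unfolding GTE_def a_def b_def using int_T int_C by (simp add: integral_diff)
  then show ?thesis
    unfolding GTE_hat_def treated control using expectation_difference_in_means[OF p] by simp
qed

end
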